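(* Let a blockchain computation contain a network split, and let $B_1$ and $B_2$ be branches of the global blockchain tree mined in the two different partitions created by the split. If $B_1$ and $B_2$ have their accounts split on the same seed block, then $B_1$ and $B_2$ are mergeable.
   Context: Peers communicate by message passing; a partition is a set of peers that can communicate. A network split is an action that separates the network into two nonempty partitions; after it, messages are delivered only within the sender's partition. Peers mine transactions into blocks (one transaction per block); each block links to one earlier block, so the collection of all mined blocks (the global blockchain) is a tree rooted at a unique genesis block. A branch is a chain of blocks from the genesis to a leaf. A transaction transfers funds from one source account to one target account. The balance of an account $a$ with respect to a block $b$ is the total of funds transferred into $a$ minus the total transferred out of $a$ by the transactions on the chain from the genesis to $b$. A transaction is valid (with respect to a chain) if applying it leaves the source account with nonnegative balance. A seed is the last block mined on a branch before the split. At a split, the accounts are split in a seed: each account's balance at the seed is divided between the two partitions into nonnegative shares summing to the balance at the seed, and post-split blocks in each partition are validated against that partition's share. A transaction is confirmed if it lies on a permanent (infinite) branch and rejected otherwise. A branch merge of two branches is an arbitrary interleaving of their transactions that preserves the order of transactions of each branch. Two branches are mergeable if all transactions mined before the split are resolved (confirmed/rejected) identically by both, and every branch merge of them keeps every transaction of the two branches valid. *)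

theory Defs
  imports Complex_Main
begin

text \<open>
  Every non-genesis block carries exactly
  one transaction (source, target, amount); a transaction is identified with the
  block that mines it.  The genesis block carries the initial allocation init.
  The blocks mined before the split form the set pre; every block mined after the
  split is mined in partition side b (1 or 2).
\<close>

record ('b, 'a) comp =
  blocks  :: "'b set"
  genesis :: 'b
  parent  :: "'b \<Rightarrow> 'b"
  src     :: "'b \<Rightarrow> 'a"
  tgt     :: "'b \<Rightarrow> 'a"
  amt     :: "'b \<Rightarrow> real"
  init    :: "'a \<Rightarrow> real"
  pre     :: "'b set"
  side    :: "'b \<Rightarrow> nat"
  share   :: "'b \<Rightarrow> nat \<Rightarrow> 'a \<Rightarrow> real"

definition edges :: "('b, 'a, 'c) comp_scheme \<Rightarrow> ('b \<times> 'b) set" where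
  "edges C = {(parent C b, b) | b. b \<in> blocks C \<and> b \<noteq> genesis C}"

definition anc :: "('b, 'a, 'c) comp_scheme \<Rightarrow> 'b \<Rightarrow> 'b \<Rightarrow> bool" where
  "anc C x y \<longleftrightarrow> (x, y) \<in> (edges C)\<^sup>*"

definition delta :: "('b, 'a, 'c) comp_scheme \<Rightarrow> 'b \<Rightarrow> 'a \<Rightarrow> real" where
  "delta C y a = (if tgt C y = a then amt C y else 0) - (if src C y = a then amt C y else 0)"

definition bal :: "('b, 'a, 'c) comp_scheme \<Rightarrow> 'b \<Rightarrow> 'a \<Rightarrow> real" where
  "bal C b a = init C a + (\<Sum>y\<in>{y. anc C y b} - {genesis C}. delta C y a)"

definition is_seed :: "('b, 'a, 'c) comp_scheme \<Rightarrow> 'b \<Rightarrow> 'b \<Rightarrow> bool" where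
  "is_seed C s b \<longleftrightarrow> s \<in> pre C \<and> anc C s b \<and> (\<forall>y. anc C y b \<and> y \<in> pre C \<longrightarrow> anc C y s)"

definition split_comp :: "('b, 'a, 'c) comp_scheme \<Rightarrow> bool" where
  "split_comp C \<longleftrightarrow>
     \<comment> \<open>the global blockchain is a tree rooted at the unique genesis block\<close>
     genesis C \<in> blocks C \<and>
     (\<forall>b \<in> blocks C - {genesis C}. parent C b \<in> blocks C) \<and>
     (\<forall>b \<in> blocks C. anc C (genesis C) b) \<and>
     \<comment> \<open>amounts and initial allocation are nonnegative\<close>
     (\<forall>b \<in> blocks C - {genesis C}. 0 \<le> amt C b) \<and>
     (\<forall>a. 0 \<le> init C a) \<and>
     \<comment> \<open>pre-split blocks: contain genesis, closed under parents\<close>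
     pre C \<subseteq> blocks C \<and> genesis C \<in> pre C \<and>
     (\<forall>b \<in> pre C - {genesis C}. parent C b \<in> pre C) \<and>
     \<comment> \<open>post-split blocks are mined in one of the two partitions and extend a block
        that is either pre-split or mined in the same partition\<close>
     (\<forall>b \<in> blocks C - pre C. side C b \<in> {1, 2} \<and>
        (parent C b \<in> pre C \<or> side C (parent C b) = side C b)) \<and>
     \<comment> \<open>pre-split transactions are valid w.r.t. their chain\<close>
     (\<forall>b \<in> pre C - {genesis C}. 0 \<le> bal C b (src C b)) \<and>
     \<comment> \<open>accounts are split in every seed: nonnegative shares summing to the balance\<close>
     (\<forall>s. (\<exists>b \<in> blocks C - pre C. is_seed C s b) \<longrightarrow>
        (\<forall>a. 0 \<le> share C s 1 a \<and> 0 \<le> share C s 2 a \<and>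
             share C s 1 a + share C s 2 a = bal C s a)) \<and>
     \<comment> \<open>post-split transactions are valid w.r.t. the partition's share in the seed\<close>
     (\<forall>b \<in> blocks C - pre C. \<forall>s. is_seed C s b \<longrightarrow>
        0 \<le> share C s (side C b) (src C b) +
             (\<Sum>y\<in>{y. anc C y b} - pre C. delta C y (src C b)))"

text \<open>A branch: a maximal chain from the genesis (finite ending in a leaf, or infinite).\<close>
definition is_branch :: "('b, 'a, 'c) comp_scheme \<Rightarrow> 'b set \<Rightarrow> bool" where
  "is_branch C B \<longleftrightarrow> B \<subseteq> blocks C \<and> genesis C \<in> B \<and>
     (\<forall>b \<in> B - {genesis C}. parent C b \<in> B) \<and>
     (\<forall>x \<in> B. \<forall>y \<in> B. anc C x y \<or> anc C y x) \<and>
     (infinite B \<or> (\<exists>l \<in> B. \<forall>c \<in> blocks C - {genesis C}. parent C c \<noteq> l))"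

definition mined_in_partition :: "('b, 'a, 'c) comp_scheme \<Rightarrow> nat \<Rightarrow> 'b set \<Rightarrow> bool" where
  "mined_in_partition C p B \<longleftrightarrow> (\<exists>b \<in> B. b \<notin> pre C) \<and> (\<forall>b \<in> B - pre C. side C b = p)"

definition branch_seed :: "('b, 'a, 'c) comp_scheme \<Rightarrow> 'b set \<Rightarrow> 'b \<Rightarrow> bool" where
  "branch_seed C B s \<longleftrightarrow> s \<in> B \<and> s \<in> pre C \<and> (\<forall>y \<in> B \<inter> pre C. anc C y s)"

text \<open>A branch merge of B1 and B2: a strict total order R on the transactions of both
  branches (common blocks occur once) preserving the order within each branch, in which
  every transaction has only finitely many predecessors (an interleaving of sequences).\<close>
definition is_branch_merge :: "('b, 'a, 'c) comp_scheme \<Rightarrow> 'b set \<Rightarrow> 'b set \<Rightarrow> ('b \<times> 'b) set \<Rightarrow> bool" where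
  "is_branch_merge C B1 B2 R \<longleftrightarrow>
     R \<subseteq> (B1 \<union> B2) \<times> (B1 \<union> B2) \<and> trans R \<and> irrefl R \<and> total_on (B1 \<union> B2) R \<and>
     (\<forall>x \<in> B1. \<forall>y \<in> B1. anc C x y \<and> x \<noteq> y \<longrightarrow> (x, y) \<in> R) \<and>
     (\<forall>x \<in> B2. \<forall>y \<in> B2. anc C x y \<and> x \<noteq> y \<longrightarrow> (x, y) \<in> R) \<and>
     (\<forall>y. finite {x. (x, y) \<in> R})"

text \<open>Balance of account a in the merge R right after applying transaction x.\<close>
definition merge_bal :: "('b, 'a, 'c) comp_scheme \<Rightarrow> ('b \<times> 'b) set \<Rightarrow> 'b \<Rightarrow> 'a \<Rightarrow> real" where
  "merge_bal C R x a = init C a + (\<Sum>y\<in>(insert x {y. (y, x) \<in> R}) - {genesis C}. delta C y a)"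

definition mergeable :: "('b, 'a, 'c) comp_scheme \<Rightarrow> 'b set \<Rightarrow> 'b set \<Rightarrow> bool" where
  "mergeable C B1 B2 \<longleftrightarrow>
     (\<forall>t \<in> pre C - {genesis C}. t \<in> B1 \<longleftrightarrow> t \<in> B2) \<and>
     (\<forall>R. is_branch_merge C B1 B2 R \<longrightarrow>
        (\<forall>x \<in> (B1 \<union> B2) - {genesis C}. 0 \<le> merge_bal C R x (src C x)))"

end

theory Submission
  imports Defs
begin

text \<open>
  Both branches contain the chain from the genesis to the common seed s, and nothing else
  mined before the split; after the split they are disjoint, being mined in different
  partitions.  Hence in any merge the transactions up to a transaction x of B1 are the
  ancestors of x together with an initial segment of the post-split part of B2, and the
  balance of the source a of x there is bal s a plus the post-split effects of both branches.
  Splitting bal s a into the two partitions' shares, each part is nonnegative: the B1 part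
  by the validity of x, the B2 part because after every post-split block of B2 every account
  (not only the source) is nonnegative with respect to the share of B2, as only the source
  of a transaction loses funds.
\<close>

lemma mem_edges_iff: "(x, y) \<in> edges C \<longleftrightarrow> y \<in> blocks C \<and> y \<noteq> genesis C \<and> x = parent C y"
  unfolding edges_def by auto

lemma anc_refl: "anc C x x"
  unfolding anc_def by simp

lemma anc_trans: "anc C x y \<Longrightarrow> anc C y z \<Longrightarrow> anc C x z"
  unfolding anc_def by simp

lemma anc_parent: "y \<in> blocks C \<Longrightarrow> y \<noteq> genesis C \<Longrightarrow> anc C (parent C y) y"
  unfolding anc_def by (simp add: mem_edges_iff r_into_rtrancl)

lemma anc_cases:
  "anc C x y \<Longrightarrow> x = y \<or> (y \<in> blocks C \<and> y \<noteq> genesis C \<and> anc C x (parent C y))"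
  unfolding anc_def by (erule rtranclE) (auto simp: mem_edges_iff)

lemma anc_mem_if_parent_closed:
  assumes "anc C x y" "y \<in> S" "\<forall>b \<in> S - {genesis C}. parent C b \<in> S"
  shows "x \<in> S"
proof -
  have "(x, y) \<in> (edges C)\<^sup>*"
    using assms(1) unfolding anc_def .
  then show ?thesis
    using assms(2) by induction (use assms(3) in \<open>auto simp: mem_edges_iff\<close>)
qed

lemma edges_trancl_irrefl:
  assumes "anc C (genesis C) b"
  shows "(b, b) \<notin> (edges C)\<^sup>+"
proof -
  have "(genesis C, b) \<in> (edges C)\<^sup>*"
    using assms unfolding anc_def .
  then show ?thesis
  proof induction
    case base
    show ?case
      by (auto elim: tranclE simp: mem_edges_iff)
  next
    case (step y z)
    show ?case
    proof
      assume "(z, z) \<in> (edges C)\<^sup>+"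
      then obtain w where "(z, w) \<in> (edges C)\<^sup>*" "(w, z) \<in> edges C"
        by (meson tranclD2)
      moreover from this(2) step(2) have "w = y"
        by (auto simp: mem_edges_iff)
      ultimately have "(y, y) \<in> (edges C)\<^sup>+"
        using step(2) by (meson rtrancl_into_trancl2)
      with step.IH show False by simp
    qed
  qed
qed

lemma not_anc_parent:
  assumes "anc C (genesis C) b" "b \<in> blocks C" "b \<noteq> genesis C"
  shows "\<not> anc C b (parent C b)"
proof
  assume "anc C b (parent C b)"
  moreover have "(parent C b, b) \<in> edges C"
    using assms(2,3) by (simp add: mem_edges_iff)
  ultimately have "(b, b) \<in> (edges C)\<^sup>+"
    unfolding anc_def by (rule rtrancl_into_trancl1)
  with edges_trancl_irrefl[OF assms(1)] show False ..
qed

lemma ancestors_eq_insert_parent: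
  assumes "b \<in> blocks C" "b \<noteq> genesis C"
  shows "{y. anc C y b} = insert b {y. anc C y (parent C b)}"
  using anc_cases[of C _ b] anc_trans[OF _ anc_parent[OF assms]] anc_refl[of C b] by auto

lemma finite_ancestors:
  assumes "anc C (genesis C) b"
  shows "finite {y. anc C y b}"
proof -
  have "(genesis C, b) \<in> (edges C)\<^sup>*"
    using assms unfolding anc_def .
  then show ?thesis
  proof induction
    case base
    have "{y. anc C y (genesis C)} = {genesis C}"
      using anc_cases[of C _ "genesis C"] anc_refl[of C "genesis C"] by auto
    then show ?case by simp
  next
    case (step y z)
    then show ?case
      using ancestors_eq_insert_parent[of z C] by (auto simp: mem_edges_iff)
  qed
qed

lemma finite_chain_has_anc_max:
  assumes "finite S" "S \<noteq> {}" "\<And>x y. x \<in> S \<Longrightarrow> y \<in> S \<Longrightarrow> anc C x y \<or> anc C y x"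
  shows "\<exists>z \<in> S. \<forall>w \<in> S. anc C w z"
  using assms
proof (induction S rule: finite_ne_induct)
  case (singleton x)
  then show ?case using anc_refl by blast
next
  case (insert x F)
  then obtain z where z: "z \<in> F" "\<forall>w \<in> F. anc C w z" by blast
  with insert.prems[of x z] show ?case
    using anc_refl[of C x] anc_trans[of C _ z x] by blast
qed

lemma split_compD:
  assumes "split_comp C"
  shows split_comp_parent_mem: "\<And>b. b \<in> blocks C \<Longrightarrow> b \<noteq> genesis C \<Longrightarrow> parent C b \<in> blocks C"
    and split_comp_anc_genesis: "\<And>b. b \<in> blocks C \<Longrightarrow> anc C (genesis C) b"
    and split_comp_amt_nonneg: "\<And>b. b \<in> blocks C \<Longrightarrow> b \<noteq> genesis C \<Longrightarrow> 0 \<le> amt C b"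
    and split_comp_genesis_pre: "genesis C \<in> pre C"
    and split_comp_parent_pre: "\<forall>b \<in> pre C - {genesis C}. parent C b \<in> pre C"
    and split_comp_side: "\<And>b. b \<in> blocks C \<Longrightarrow> b \<notin> pre C \<Longrightarrow> side C b \<in> {1, 2}"
    and split_comp_side_parent: "\<And>b. b \<in> blocks C \<Longrightarrow> b \<notin> pre C \<Longrightarrow>
      parent C b \<in> pre C \<or> side C (parent C b) = side C b"
    and split_comp_pre_valid: "\<And>b. b \<in> pre C \<Longrightarrow> b \<noteq> genesis C \<Longrightarrow> 0 \<le> bal C b (src C b)"
    and split_comp_share: "\<And>s b a. b \<in> blocks C \<Longrightarrow> b \<notin> pre C \<Longrightarrow> is_seed C s b \<Longrightarrow>
      0 \<le> share C s 1 a \<and> 0 \<le> share C s 2 a \<and> share C s 1 a + share C s 2 a = bal C s a"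
    and split_comp_post_valid: "\<And>s b. b \<in> blocks C \<Longrightarrow> b \<notin> pre C \<Longrightarrow> is_seed C s b \<Longrightarrow>
      0 \<le> share C s (side C b) (src C b) + (\<Sum>y \<in> {y. anc C y b} - pre C. delta C y (src C b))"
  using assms unfolding split_comp_def by (elim conjE; meson DiffI singletonD)+

lemma split_comp_anc_pre:
  assumes "split_comp C" "anc C y z" "z \<in> pre C"
  shows "y \<in> pre C"
  using anc_mem_if_parent_closed[OF assms(2,3) split_comp_parent_pre[OF assms(1)]] .

lemma is_seed_parent:
  assumes "is_seed C s b" "b \<in> blocks C" "b \<noteq> genesis C" "b \<notin> pre C"
  shows "is_seed C s (parent C b)"
  using assms anc_cases[of C s b] anc_trans[OF _ anc_parent[OF assms(2,3)]]
  unfolding is_seed_def by blast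

lemma bal_eq_seed_bal_plus_post_sum:
  assumes "split_comp C" "b \<in> blocks C" "is_seed C s b"
  shows "bal C b a = bal C s a + (\<Sum>y \<in> {y. anc C y b} - pre C. delta C y a)"
proof -
  have s: "s \<in> pre C" "anc C s b" "\<And>y. anc C y b \<Longrightarrow> y \<in> pre C \<Longrightarrow> anc C y s"
    using assms(3) unfolding is_seed_def by blast+
  have "{y. anc C y b} - {genesis C} = ({y. anc C y s} - {genesis C}) \<union> ({y. anc C y b} - pre C)"
    using s anc_trans[OF _ s(2)] split_comp_genesis_pre[OF assms(1)] by blast
  moreover have "({y. anc C y s} - {genesis C}) \<inter> ({y. anc C y b} - pre C) = {}"
    using split_comp_anc_pre[OF assms(1) _ s(1)] by blast
  moreover have "finite {y. anc C y b}"
    by (rule finite_ancestors[OF split_comp_anc_genesis[OF assms(1,2)]])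
  moreover from this have "finite {y. anc C y s}"
    by (rule rev_finite_subset) (use anc_trans[OF _ s(2)] in blast)
  ultimately show ?thesis
    unfolding bal_def by (simp add: sum.union_disjoint)
qed

lemma post_sum_eq_parent:
  assumes "anc C (genesis C) b" "b \<in> blocks C" "b \<noteq> genesis C" "b \<notin> pre C"
  shows "(\<Sum>y \<in> {y. anc C y b} - pre C. f y) = f b + (\<Sum>y \<in> {y. anc C y (parent C b)} - pre C. f y)"
proof -
  have "{y. anc C y b} - pre C = insert b ({y. anc C y (parent C b)} - pre C)"
    using ancestors_eq_insert_parent[OF assms(2,3)] assms(4) by blast
  moreover have "finite {y. anc C y (parent C b)}"
    using ancestors_eq_insert_parent[OF assms(2,3)] finite_ancestors[OF assms(1)] by auto
  ultimately show ?thesis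
    using not_anc_parent[OF assms(1-3)] by simp
qed

lemma share_plus_post_sum_nonneg:
  assumes "split_comp C" "b \<in> blocks C" "b \<notin> pre C" "is_seed C s b"
  shows "0 \<le> share C s (side C b) a + (\<Sum>y \<in> {y. anc C y b} - pre C. delta C y a)"
proof -
  have "(genesis C, b) \<in> (edges C)\<^sup>*"
    using split_comp_anc_genesis[OF assms(1,2)] unfolding anc_def .
  then show ?thesis
    using assms(2-4)
  proof induction
    case base
    then show ?case using split_comp_genesis_pre[OF assms(1)] by blast
  next
    case (step y z)
    have z: "z \<noteq> genesis C" "y = parent C z"
      using step(2) by (auto simp: mem_edges_iff)
    have y: "y \<in> blocks C"
      using split_comp_parent_mem[OF assms(1) step(4) z(1)] z(2) by simp
    have "0 \<le> share C s (side C z) a"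
      using split_comp_share[OF assms(1) step(4-6)] split_comp_side[OF assms(1) step(4,5)] by auto
    then have parent_bound: "0 \<le> share C s (side C z) a + (\<Sum>w \<in> {w. anc C w y} - pre C. delta C w a)"
    proof (cases "y \<in> pre C")
      case True
      then have "{w. anc C w y} - pre C = {}"
        using split_comp_anc_pre[OF assms(1) _ True] by blast
      with \<open>0 \<le> share C s (side C z) a\<close> show ?thesis by (simp only: sum.empty)
    next
      case False
      have "side C y = side C z"
        using split_comp_side_parent[OF assms(1) step(4,5)] z(2) False by auto
      moreover have "is_seed C s y"
        using is_seed_parent[OF step(6,4) z(1) step(5)] z(2) by simp
      ultimately show ?thesis
        using step.IH y False by simp
    qed
    have post_sum: "(\<Sum>w \<in> {w. anc C w z} - pre C. delta C w a) =
        delta C z a + (\<Sum>w \<in> {w. anc C w y} - pre C. delta C w a)"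
      using post_sum_eq_parent[OF split_comp_anc_genesis[OF assms(1) step(4)] step(4) z(1) step(5)]
        z(2) by simp
    show ?case
    proof (cases "src C z = a")
      case True
      then show ?thesis using split_comp_post_valid[OF assms(1) step(4-6)] by simp
    next
      case False
      then have "0 \<le> delta C z a"
        using split_comp_amt_nonneg[OF assms(1) step(4) z(1)] by (simp add: delta_def)
      with post_sum parent_bound show ?thesis by linarith
    qed
  qed
qed

lemma is_branch_subset_blocks: "is_branch C B \<Longrightarrow> B \<subseteq> blocks C"
  unfolding is_branch_def by blast

lemma is_branch_genesis_mem: "is_branch C B \<Longrightarrow> genesis C \<in> B"
  unfolding is_branch_def by blast

lemma is_branch_linear: "is_branch C B \<Longrightarrow> x \<in> B \<Longrightarrow> y \<in> B \<Longrightarrow> anc C x y \<or> anc C y x"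
  unfolding is_branch_def by blast

lemma is_branch_anc_mem:
  assumes "is_branch C B" "anc C y z" "z \<in> B"
  shows "y \<in> B"
  using assms(1) anc_mem_if_parent_closed[OF assms(2,3)] unfolding is_branch_def by blast

lemma mined_in_partition_side_mem:
  assumes "split_comp C" "is_branch C B" "mined_in_partition C p B"
  shows "p \<in> {1, 2}"
proof -
  obtain b where "b \<in> B" "b \<notin> pre C" "side C b = p"
    using assms(3) unfolding mined_in_partition_def by blast
  then show ?thesis
    using split_comp_side[OF assms(1)] is_branch_subset_blocks[OF assms(2)] by blast
qed

lemma branch_seed_pre_eq:
  assumes "split_comp C" "is_branch C B" "branch_seed C B s"
  shows "B \<inter> pre C = {y. anc C y s}"
  using assms(3) is_branch_anc_mem[OF assms(2)] split_comp_anc_pre[OF assms(1)]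
  unfolding branch_seed_def by blast

lemma branch_seed_is_seed:
  assumes "split_comp C" "is_branch C B" "branch_seed C B s" "z \<in> B" "z \<notin> pre C"
  shows "is_seed C s z"
proof -
  have s: "s \<in> B" "s \<in> pre C"
    using assms(3) unfolding branch_seed_def by blast+
  have "anc C s z"
    using is_branch_linear[OF assms(2) s(1) assms(4)] split_comp_anc_pre[OF assms(1) _ s(2)] assms(5)
    by blast
  then show ?thesis
    using branch_seed_pre_eq[OF assms(1-3)] is_branch_anc_mem[OF assms(2) _ assms(4)] s(2)
    unfolding is_seed_def by blast
qed

lemma is_branch_merge_sym: "is_branch_merge C B1 B2 R \<Longrightarrow> is_branch_merge C B2 B1 R"
  unfolding is_branch_merge_def by (simp add: Un_commute)

lemma is_branch_mergeD:
  assumes "is_branch_merge C B1 B2 R"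
  shows branch_merge_subset: "R \<subseteq> (B1 \<union> B2) \<times> (B1 \<union> B2)"
    and branch_merge_trans: "trans R"
    and branch_merge_irrefl: "irrefl R"
    and branch_merge_anc_first: "\<And>x y. x \<in> B1 \<Longrightarrow> y \<in> B1 \<Longrightarrow> anc C x y \<Longrightarrow> x \<noteq> y \<Longrightarrow> (x, y) \<in> R"
    and branch_merge_finite_preds: "\<And>y. finite {x. (x, y) \<in> R}"
  using assms unfolding is_branch_merge_def by blast+

lemma branch_merge_pred_anc:
  assumes "is_branch_merge C B1 B2 R" "is_branch C B1" "x \<in> B1" "y \<in> B1" "(y, x) \<in> R"
  shows "anc C y x"
proof (rule ccontr)
  assume "\<not> anc C y x"
  then have "(x, y) \<in> R"
    using branch_merge_anc_first[OF assms(1,3,4)] is_branch_linear[OF assms(2,4,3)] anc_refl[of C x]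
    by blast
  with assms(5) branch_merge_trans[OF assms(1)] branch_merge_irrefl[OF assms(1)] show False
    by (meson irrefl_def transD)
qed

lemma ancestors_eq_insert_branch_preds:
  assumes "is_branch_merge C B1 B2 R" "is_branch C B1" "x \<in> B1"
  shows "{y. anc C y x} = insert x {y \<in> B1. (y, x) \<in> R}"
proof (intro set_eqI iffI)
  fix y
  assume "y \<in> {y. anc C y x}"
  then show "y \<in> insert x {y \<in> B1. (y, x) \<in> R}"
    using is_branch_anc_mem[OF assms(2) _ assms(3)] branch_merge_anc_first[OF assms(1) _ assms(3)]
    by blast
next
  fix y
  assume "y \<in> insert x {y \<in> B1. (y, x) \<in> R}"
  then show "y \<in> {y. anc C y x}"
    using branch_merge_pred_anc[OF assms] anc_refl[of C x] by blast
qed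

lemma merge_bal_eq_bal_plus_other_branch:
  assumes "split_comp C" "is_branch_merge C B1 B2 R" "is_branch C B1" "x \<in> B1"
  shows "merge_bal C R x a = bal C x a + (\<Sum>y \<in> {y \<in> B2 - B1. (y, x) \<in> R}. delta C y a)"
proof -
  let ?A = "{y. anc C y x} - {genesis C}" and ?S = "{y \<in> B2 - B1. (y, x) \<in> R}"
  have "insert x {y. (y, x) \<in> R} - {genesis C} = ?A \<union> ?S"
    unfolding ancestors_eq_insert_branch_preds[OF assms(2-4)]
    using branch_merge_subset[OF assms(2)] is_branch_genesis_mem[OF assms(3)] by auto
  moreover have "?A \<inter> ?S = {}"
    using is_branch_anc_mem[OF assms(3) _ assms(4)] by blast
  moreover have "finite ?A"
    using is_branch_subset_blocks[OF assms(3)] assms(4)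
    by (intro finite_Diff finite_ancestors split_comp_anc_genesis[OF assms(1)]) blast
  moreover have "finite ?S"
    using branch_merge_finite_preds[OF assms(2), of x] by (rule rev_finite_subset) blast
  ultimately show ?thesis
    unfolding merge_bal_def bal_def by (simp add: sum.union_disjoint)
qed

lemma share_plus_merge_post_preds_nonneg:
  assumes "split_comp C" "is_branch_merge C B1 B2 R" "is_branch C B1" "branch_seed C B1 s"
    "mined_in_partition C p B1"
  shows "0 \<le> share C s p a + (\<Sum>y \<in> {y \<in> B1 - pre C. (y, x) \<in> R}. delta C y a)"
proof (cases "{y \<in> B1 - pre C. (y, x) \<in> R} = {}")
  case True
  obtain b where b: "b \<in> B1" "b \<notin> pre C" "side C b = p"
    using assms(5) unfolding mined_in_partition_def by blast
  then have "0 \<le> share C s p a"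
    using split_comp_share[OF assms(1) _ b(2) branch_seed_is_seed[OF assms(1,3,4) b(1,2)]]
      split_comp_side[OF assms(1) _ b(2)] is_branch_subset_blocks[OF assms(3)]
    by (metis empty_iff insert_iff subsetD)
  with True show ?thesis by (simp only: sum.empty)
next
  case False
  let ?S = "{y \<in> B1 - pre C. (y, x) \<in> R}"
  have "finite ?S"
    using branch_merge_finite_preds[OF assms(2), of x] by (rule rev_finite_subset) blast
  then obtain z where z: "z \<in> ?S" "\<forall>w \<in> ?S. anc C w z"
    using finite_chain_has_anc_max[OF _ False] is_branch_linear[OF assms(3)] by blast
  have "?S = {y. anc C y z} - pre C"
  proof
    show "?S \<subseteq> {y. anc C y z} - pre C"
      using z(2) by blast
    show "{y. anc C y z} - pre C \<subseteq> ?S"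
    proof
      fix w
      assume w: "w \<in> {y. anc C y z} - pre C"
      have "w \<in> B1"
        using is_branch_anc_mem[OF assms(3)] w z(1) by blast
      moreover have "(w, x) \<in> R"
      proof (cases "w = z")
        case False
        then have "(w, z) \<in> R"
          using branch_merge_anc_first[OF assms(2) \<open>w \<in> B1\<close>] w z(1) by blast
        with z(1) branch_merge_trans[OF assms(2)] show ?thesis
          by (blast dest: transD)
      qed (use z(1) in blast)
      ultimately show "w \<in> ?S"
        using w by blast
    qed
  qed
  moreover have "side C z = p"
    using assms(5) z(1) unfolding mined_in_partition_def by blast
  moreover have "is_seed C s z"
    using branch_seed_is_seed[OF assms(1,3,4)] z(1) by blast
  moreover have "z \<in> blocks C"
    using is_branch_subset_blocks[OF assms(3)] z(1) by blast
  ultimately show ?thesis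
    using share_plus_post_sum_nonneg[OF assms(1) _ _ _, of z s a] z(1) by simp
qed

lemma merge_bal_src_nonneg:
  assumes "split_comp C" "is_branch C B1" "is_branch C B2" "p1 \<noteq> p2"
    "mined_in_partition C p1 B1" "mined_in_partition C p2 B2"
    "branch_seed C B1 s" "branch_seed C B2 s" "is_branch_merge C B1 B2 R" "x \<in> B1" "x \<noteq> genesis C"
  shows "0 \<le> merge_bal C R x (src C x)"
proof -
  have pre_eq: "B1 \<inter> pre C = B2 \<inter> pre C"
    using branch_seed_pre_eq[OF assms(1,2,7)] branch_seed_pre_eq[OF assms(1,3,8)] by simp
  have x: "x \<in> blocks C"
    using is_branch_subset_blocks[OF assms(2)] assms(10) by blast
  show ?thesis
  proof (cases "x \<in> pre C")
    case True
    with pre_eq assms(10) have "x \<in> B2" by blast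
    then have no_other: "{y \<in> B2 - B1. (y, x) \<in> R} = {}"
      using branch_merge_pred_anc[OF is_branch_merge_sym[OF assms(9)] assms(3)]
        is_branch_anc_mem[OF assms(2) _ assms(10)] by blast
    show ?thesis
      using merge_bal_eq_bal_plus_other_branch[OF assms(1,9,2,10), of "src C x", unfolded no_other]
        split_comp_pre_valid[OF assms(1) True assms(11)] by simp
  next
    case False
    let ?a = "src C x" and ?S = "{y \<in> B2 - pre C. (y, x) \<in> R}"
    have seed: "is_seed C s x"
      using branch_seed_is_seed[OF assms(1,2,7,10) False] .
    have side1: "\<And>y. y \<in> B1 - pre C \<Longrightarrow> side C y = p1"
      and side2: "\<And>y. y \<in> B2 - pre C \<Longrightarrow> side C y = p2"
      using assms(5,6) unfolding mined_in_partition_def by blast+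
    have "B2 - B1 = B2 - pre C"
    proof
      show "B2 - B1 \<subseteq> B2 - pre C"
        using pre_eq by blast
      show "B2 - pre C \<subseteq> B2 - B1"
        using side1 side2 assms(4) by fastforce
    qed
    then have "merge_bal C R x ?a =
        bal C s ?a + (\<Sum>y \<in> {y. anc C y x} - pre C. delta C y ?a) + (\<Sum>y \<in> ?S. delta C y ?a)"
      using merge_bal_eq_bal_plus_other_branch[OF assms(1,9,2,10), of ?a]
        bal_eq_seed_bal_plus_post_sum[OF assms(1) x seed, of ?a] by simp
    moreover have "bal C s ?a = share C s p1 ?a + share C s p2 ?a"
      using split_comp_share[OF assms(1) x False seed, of ?a] assms(4)
        mined_in_partition_side_mem[OF assms(1,2,5)] mined_in_partition_side_mem[OF assms(1,3,6)]
      by auto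
    moreover have "0 \<le> share C s p1 ?a + (\<Sum>y \<in> {y. anc C y x} - pre C. delta C y ?a)"
      using split_comp_post_valid[OF assms(1) x False seed] side1 assms(10) False by simp
    moreover have "0 \<le> share C s p2 ?a + (\<Sum>y \<in> ?S. delta C y ?a)"
      using share_plus_merge_post_preds_nonneg[OF assms(1) is_branch_merge_sym[OF assms(9)] assms(3,8,6)] .
    ultimately show ?thesis by linarith
  qed
qed

theorem proposition1:
  fixes C :: "('b, 'a) comp" and B1 B2 :: "'b set" and p1 p2 :: nat and s :: 'b
  assumes "split_comp C"
    and "is_branch C B1" and "is_branch C B2"
    and "p1 \<noteq> p2"
    and "mined_in_partition C p1 B1" and "mined_in_partition C p2 B2"
    and "branch_seed C B1 s" and "branch_seed C B2 s"
  shows "mergeable C B1 B2"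
proof -
  have "B1 \<inter> pre C = B2 \<inter> pre C"
    using branch_seed_pre_eq[OF assms(1,2,7)] branch_seed_pre_eq[OF assms(1,3,8)] by simp
  moreover have "0 \<le> merge_bal C R x (src C x)"
    if "is_branch_merge C B1 B2 R" "x \<in> (B1 \<union> B2) - {genesis C}" for R x
    using that merge_bal_src_nonneg[OF assms that(1)]
      merge_bal_src_nonneg[OF assms(1,3,2) assms(4)[symmetric] assms(6,5,8,7) is_branch_merge_sym[OF that(1)]]
    by blast
  ultimately show ?thesis
    unfolding mergeable_def by blast
qed

end
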